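(* Let $n \ge 3$, let $u_1,u_2 \in M_n(\mathbb C)$ be unitaries such that $\{1_n, u_1^*u_2, u_2^*u_1\}$ is linearly independent, let $0<t<1$, and define $\Phi\colon M_n(\mathbb C)\to M_n(\mathbb C)$ by $\Phi(x) = t\,u_1xu_1^* + (1-t)\,u_2xu_2^*$. Then for every integer $k \ge 2$, $\Phi$ is $k$-noisy if and only if $t \in k^{-1}\mathbb Z$. In particular, if $t$ is irrational, $\Phi$ is a mixture of unitaries that is not $k$-noisy for any $k\ge 2$.
   Context: A linear map $\Phi\colon M_n(\mathbb C)\to M_n(\mathbb C)$ is factorizable with ancilla $(\mathcal A,\tau)$ if $(\mathcal A,\tau)$ is a von Neumann algebra with a normal faithful tracial state $\tau$ and there is a unitary $u \in M_n(\mathbb C)\otimes \mathcal A$ with $\Phi(x) = (\mathrm{id}_n\otimes\tau)(u(x\otimes 1_{\mathcal A})u^* )$ for all $x\in M_n(\mathbb C)$. $\Phi$ is called $k$-noisy if it is factorizable with ancilla $(M_k(\mathbb C),\mathrm{tr}_k)$, where $\mathrm{tr}_k$ is the normalized trace. *)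

theory Defs
  imports "HOL-Analysis.Analysis"
begin

text \<open>Matrices in M_n(C) are represented as complex^'n^'n for a finite index type 'n
  (n = CARD('n)).  The ancilla M_k(C) is indexed by a finite type 'k (k = CARD('k)),
  and M_n(C) \<otimes> M_k(C) is identified with complex^('n\<times>'k)^('n\<times>'k).\<close>

definition adjoint_mat :: "complex^'m^'n \<Rightarrow> complex^'n^'m" where
  "adjoint_mat A = (\<chi> i j. cnj (A $ j $ i))"

definition unitary_mat :: "complex^'n^'n \<Rightarrow> bool" where
  "unitary_mat U \<longleftrightarrow> U ** adjoint_mat U = mat 1 \<and> adjoint_mat U ** U = mat 1"

definition cscale_mat :: "complex \<Rightarrow> complex^'m^'n \<Rightarrow> complex^'m^'n" where
  "cscale_mat c A = (\<chi> i j. c * A $ i $ j)"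

definition tensor_id :: "complex^'n^'n \<Rightarrow> complex^('n \<times> 'k::finite)^('n \<times> 'k)" where
  "tensor_id x = (\<chi> p q. x $ fst p $ fst q * (if snd p = snd q then 1 else 0))"

definition partial_tr :: "complex^('n \<times> 'k::finite)^('n \<times> 'k) \<Rightarrow> complex^'n^'n" where
  "partial_tr M = (\<chi> i j. (\<Sum>a\<in>(UNIV::'k set). M $ (i, a) $ (j, a)) / of_nat CARD('k))"

text \<open>\<Phi> is factorizable with ancilla (M_k(C), tr_k), k = CARD('k).\<close>
definition k_noisy :: "'k::finite itself \<Rightarrow> (complex^'n^'n \<Rightarrow> complex^'n^'n) \<Rightarrow> bool" where
  "k_noisy _ \<Phi> \<longleftrightarrow> (\<exists>u :: complex^('n \<times> 'k)^('n \<times> 'k). unitary_mat u \<and>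
      (\<forall>x. \<Phi> x = partial_tr (u ** (tensor_id x :: complex^('n \<times> 'k)^('n \<times> 'k)) ** adjoint_mat u)))"

end

theory Submission
  imports Defs
begin

text \<open>
  If a unitary u on C^n (x) C^k implements Phi, its k^2 blocks u_ab form a Kraus family of k Phi.
  Since u1 and u2 are linearly independent, every Kraus family of this channel lies in their span:
  u_ab = C_ab u1 + D_ab u2 with sum |C_ab|^2 = k t. Unitarity of u and the independence of
  1, u1^* u2, u2^* u1 give C^* C + D^* D = 1 and C^* D = 0, so C^* C is an orthogonal projection
  and its trace k t is a natural number. Conversely, for t = m / k the block diagonal unitary with
  m blocks u1 and k - m blocks u2 implements Phi.
\<close>

lemma matrix_mult_nth: "(A ** B) $ i $ j = (\<Sum>k\<in>UNIV. A $ i $ k * B $ k $ j)"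
  by (simp add: matrix_matrix_mult_def)

lemma matrix_add_rdistrib: "(A + B) ** C = A ** C + B ** C"
  by (simp add: vec_eq_iff matrix_mult_nth distrib_right sum.distrib)

lemma scaleR_matrix_nth: "(r *\<^sub>R A) $ i $ j = of_real r * (A $ i $ j :: complex)"
  by (simp add: scaleR_conv_of_real[where 'a=complex])

lemma adjoint_mat_nth [simp]: "adjoint_mat A $ i $ j = cnj (A $ j $ i)"
  by (simp add: adjoint_mat_def)

lemma cscale_mat_nth [simp]: "cscale_mat c A $ i $ j = c * A $ i $ j"
  by (simp add: cscale_mat_def)

lemma adjoint_mat_adjoint_mat [simp]: "adjoint_mat (adjoint_mat A) = A"
  by (simp add: vec_eq_iff)

lemma adjoint_mat_add [simp]: "adjoint_mat (A + B) = adjoint_mat A + adjoint_mat B"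
  by (simp add: vec_eq_iff)

lemma adjoint_mat_zero [simp]: "adjoint_mat 0 = 0"
  by (simp add: vec_eq_iff)

lemma adjoint_mat_cscale [simp]: "adjoint_mat (cscale_mat c A) = cscale_mat (cnj c) (adjoint_mat A)"
  by (simp add: vec_eq_iff)

lemma adjoint_mat_mult: "adjoint_mat (A ** B) = adjoint_mat B ** adjoint_mat A"
  by (simp add: vec_eq_iff matrix_mult_nth mult.commute)

lemma cscale_mat_mult_left [simp]: "cscale_mat c A ** B = cscale_mat c (A ** B)"
  by (simp add: vec_eq_iff matrix_mult_nth sum_distrib_left mult.assoc)

lemma cscale_mat_mult_right [simp]: "A ** cscale_mat c B = cscale_mat c (A ** B)"
  by (simp add: vec_eq_iff matrix_mult_nth sum_distrib_left mult.left_commute)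

lemma cscale_mat_cscale_mat [simp]: "cscale_mat a (cscale_mat b A) = cscale_mat (a * b) A"
  by (simp add: vec_eq_iff mult.assoc)

lemma cscale_mat_add_left: "cscale_mat (a + b) A = cscale_mat a A + cscale_mat b A"
  by (simp add: vec_eq_iff distrib_right)

lemma cscale_mat_add_right: "cscale_mat c (A + B) = cscale_mat c A + cscale_mat c B"
  by (simp add: vec_eq_iff distrib_left)

lemma cscale_mat_sum_left: "(\<Sum>x\<in>S. cscale_mat (f x) A) = cscale_mat (\<Sum>x\<in>S. f x) A"
  by (induction S rule: infinite_finite_induct) (simp_all add: vec_eq_iff distrib_right)

lemma cscale_mat_zero_left [simp]: "cscale_mat 0 A = 0"
  by (simp add: vec_eq_iff)

lemma cscale_mat_one [simp]: "cscale_mat 1 A = A"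
  by (simp add: vec_eq_iff)

subsection \<open>The Hilbert-Schmidt inner product\<close>

definition hs_inner :: "complex^'m^'n \<Rightarrow> complex^'m^'n \<Rightarrow> complex" where
  "hs_inner A B = (\<Sum>i\<in>UNIV. \<Sum>j\<in>UNIV. A $ i $ j * cnj (B $ i $ j))"

lemma hs_inner_add_left: "hs_inner (A + B) C = hs_inner A C + hs_inner B C"
  by (simp add: hs_inner_def distrib_right sum.distrib)

lemma hs_inner_diff_left: "hs_inner (A - B) C = hs_inner A C - hs_inner B C"
  by (simp add: hs_inner_def left_diff_distrib sum_subtractf)

lemma hs_inner_cscale_left: "hs_inner (cscale_mat c A) B = c * hs_inner A B"
  by (simp add: hs_inner_def sum_distrib_left mult.assoc)

lemma hs_inner_add_right: "hs_inner A (B + C) = hs_inner A B + hs_inner A C"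
  by (simp add: hs_inner_def distrib_left sum.distrib)

lemma hs_inner_cscale_right: "hs_inner A (cscale_mat c B) = cnj c * hs_inner A B"
  by (simp add: hs_inner_def sum_distrib_left mult.left_commute)

lemma hs_inner_commute: "hs_inner B A = cnj (hs_inner A B)"
  by (simp add: hs_inner_def mult.commute)

lemma hs_inner_self: "hs_inner A A = of_real (\<Sum>i\<in>UNIV. \<Sum>j\<in>UNIV. (cmod (A $ i $ j))\<^sup>2)"
  unfolding hs_inner_def of_real_sum complex_norm_square ..

lemma hs_inner_self_eq_0 [simp]: "hs_inner A A = 0 \<longleftrightarrow> A = 0"
  unfolding hs_inner_self of_real_eq_0_iff by (simp add: sum_nonneg_eq_0_iff sum_nonneg vec_eq_iff)

definition lin_indep2 :: "complex^'m^'n \<Rightarrow> complex^'m^'n \<Rightarrow> bool" where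
  "lin_indep2 V W \<longleftrightarrow> (\<forall>x y. cscale_mat x V + cscale_mat y W = 0 \<longrightarrow> x = 0 \<and> y = 0)"

lemma hs_inner_projection_orthogonal:
  assumes "V \<noteq> 0"
  shows "hs_inner (A - cscale_mat (hs_inner A V / hs_inner V V) V) V = 0"
  using assms by (simp add: hs_inner_diff_left hs_inner_cscale_left)

lemma lin_indep2_sym: "lin_indep2 V W \<Longrightarrow> lin_indep2 W V"
  unfolding lin_indep2_def by (metis add.commute)

lemma lin_indep2_diff_nonzero:
  assumes "lin_indep2 V W"
  shows "V - cscale_mat c W \<noteq> 0"
proof
  assume "V - cscale_mat c W = 0"
  then have "cscale_mat 1 V + cscale_mat (- c) W = 0"
    by (simp add: vec_eq_iff)
  with assms show False
    unfolding lin_indep2_def by (metis one_neq_zero)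
qed

lemma lin_indep2_exists_orthogonal:
  assumes "lin_indep2 V W"
  obtains G where "hs_inner G W = 0" "hs_inner V G \<noteq> 0"
proof
  define c where "c = hs_inner V W / hs_inner W W"
  define G where "G = V - cscale_mat c W"
  have "W \<noteq> 0"
    using lin_indep2_diff_nonzero[OF lin_indep2_sym[OF assms], of 0] by simp
  then show GW: "hs_inner G W = 0"
    unfolding G_def c_def by (rule hs_inner_projection_orthogonal)
  have "G \<noteq> 0"
    unfolding G_def by (rule lin_indep2_diff_nonzero[OF assms])
  moreover have "hs_inner G X = hs_inner V X - c * hs_inner W X" for X
    by (simp add: G_def hs_inner_diff_left hs_inner_cscale_left)
  then have "hs_inner G G = hs_inner V G"
    using GW hs_inner_commute[of W G] by simp
  ultimately show "hs_inner V G \<noteq> 0" by (metis hs_inner_self_eq_0)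
qed

lemma lin_indep2_orthogonal_decomposition:
  assumes "lin_indep2 V W"
  obtains c d R where "A = cscale_mat c V + cscale_mat d W + R"
    and "hs_inner R V = 0" and "hs_inner R W = 0"
proof -
  have "V \<noteq> 0"
    using lin_indep2_diff_nonzero[OF assms, of 0] by simp
  define l where "l = hs_inner W V / hs_inner V V"
  define F where "F = W - cscale_mat l V"
  have FV: "hs_inner F V = 0"
    unfolding F_def l_def using \<open>V \<noteq> 0\<close> by (rule hs_inner_projection_orthogonal)
  have "F \<noteq> 0"
    unfolding F_def by (rule lin_indep2_diff_nonzero[OF lin_indep2_sym[OF assms]])
  define m where "m = hs_inner A V / hs_inner V V"
  define n where "n = hs_inner A F / hs_inner F F"
  define R where "R = A - cscale_mat m V - cscale_mat n F"
  have R_inner: "hs_inner R X = hs_inner A X - m * hs_inner V X - n * hs_inner F X" for X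
    by (simp add: R_def hs_inner_diff_left hs_inner_cscale_left)
  have VF: "hs_inner V F = 0"
    using FV hs_inner_commute[of V F] by simp
  have RV: "hs_inner R V = 0"
    using \<open>V \<noteq> 0\<close> by (simp add: R_inner FV m_def)
  have RF: "hs_inner R F = 0"
    using \<open>F \<noteq> 0\<close> by (simp add: R_inner VF n_def)
  have "W = F + cscale_mat l V"
    by (simp add: F_def)
  then have RW: "hs_inner R W = 0"
    by (simp add: hs_inner_add_right hs_inner_cscale_right RV RF)
  have "A = cscale_mat (m - n * l) V + cscale_mat n W + R"
    by (simp add: R_def F_def vec_eq_iff algebra_simps)
  with RV RW that show thesis by blast
qed

subsection \<open>Kraus families of a mixture of two conjugations\<close>

definition matrix_unit :: "'m \<Rightarrow> 'n \<Rightarrow> 'a::zero_neq_one^'n^'m" where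
  "matrix_unit p q = (\<chi> r s. if r = p \<and> s = q then 1 else 0)"

lemma mult_matrix_unit_nth: "(W ** matrix_unit p q) $ i $ k = (if k = q then W $ i $ p else 0)"
  by (simp add: matrix_mult_nth matrix_unit_def if_distrib if_distribR cong: if_cong)

lemma conj_matrix_unit_nth:
  "(W ** matrix_unit p q ** adjoint_mat W) $ i $ j = W $ i $ p * cnj (W $ j $ q)"
proof -
  have "(W ** matrix_unit p q) $ i $ k * adjoint_mat W $ k $ j
      = (if k = q then W $ i $ p * cnj (W $ j $ q) else 0)" for k
    by (simp add: mult_matrix_unit_nth)
  then show ?thesis
    by (simp add: matrix_mult_nth[of "W ** matrix_unit p q"])
qed

text \<open>The quantity |<W, Z>|^2 is linear in the map x \<mapsto> W x W^*, through its values on matrix units.\<close>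

lemma norm_hs_inner_sq:
  "of_real ((cmod (hs_inner W Z))\<^sup>2) = (\<Sum>i\<in>UNIV. \<Sum>p\<in>UNIV. \<Sum>j\<in>UNIV. \<Sum>q\<in>UNIV.
     cnj (Z $ i $ p) * Z $ j $ q * (W ** matrix_unit p q ** adjoint_mat W) $ i $ j)"
  unfolding complex_norm_square conj_matrix_unit_nth hs_inner_def cnj_sum complex_cnj_mult
    complex_cnj_cnj sum_distrib_right
  by (simp add: sum_distrib_left mult_ac)

lemma kraus_quadratic_form:
  fixes W :: "'a \<Rightarrow> complex^'m^'n" and V1 V2 :: "complex^'m^'n" and \<alpha> \<beta> :: real
  assumes "\<And>x. (\<Sum>k\<in>K. W k ** x ** adjoint_mat (W k))
      = \<alpha> *\<^sub>R (V1 ** x ** adjoint_mat V1) + \<beta> *\<^sub>R (V2 ** x ** adjoint_mat V2)"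
  shows "(\<Sum>k\<in>K. (cmod (hs_inner (W k) Z))\<^sup>2)
      = \<alpha> * (cmod (hs_inner V1 Z))\<^sup>2 + \<beta> * (cmod (hs_inner V2 Z))\<^sup>2"
proof -
  have "of_real (\<Sum>k\<in>K. (cmod (hs_inner (W k) Z))\<^sup>2) = (\<Sum>i\<in>UNIV. \<Sum>p\<in>UNIV. \<Sum>j\<in>UNIV. \<Sum>q\<in>UNIV.
      cnj (Z $ i $ p) * Z $ j $ q * (\<Sum>k\<in>K. W k ** matrix_unit p q ** adjoint_mat (W k)) $ i $ j)"
    unfolding of_real_sum norm_hs_inner_sq sum_component sum_distrib_left
    by (simp add: sum.swap[where A = K])
  also have "\<dots> = of_real (\<alpha> * (cmod (hs_inner V1 Z))\<^sup>2 + \<beta> * (cmod (hs_inner V2 Z))\<^sup>2)"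
    unfolding assms of_real_add of_real_mult norm_hs_inner_sq vector_add_component
      scaleR_matrix_nth
    by (simp add: sum.distrib sum_distrib_left algebra_simps)
  finally show ?thesis
    by (simp only: of_real_eq_iff)
qed

lemma kraus_operators_in_span:
  fixes W :: "'a \<Rightarrow> complex^'m^'n" and V1 V2 :: "complex^'m^'n" and \<alpha> \<beta> :: real
  assumes "finite K" and indep: "lin_indep2 V1 V2"
    and kraus: "\<And>x. (\<Sum>k\<in>K. W k ** x ** adjoint_mat (W k))
      = \<alpha> *\<^sub>R (V1 ** x ** adjoint_mat V1) + \<beta> *\<^sub>R (V2 ** x ** adjoint_mat V2)"
  obtains c d where "\<And>k. k \<in> K \<Longrightarrow> W k = cscale_mat (c k) V1 + cscale_mat (d k) V2"
    and "(\<Sum>k\<in>K. (cmod (c k))\<^sup>2) = \<alpha>"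
proof -
  note quadratic = kraus_quadratic_form[OF kraus]
  have "\<exists>c d. W k = cscale_mat c V1 + cscale_mat d V2" if "k \<in> K" for k
  proof -
    obtain c d R where Wk: "W k = cscale_mat c V1 + cscale_mat d V2 + R"
      and RV1: "hs_inner R V1 = 0" and RV2: "hs_inner R V2 = 0"
      using lin_indep2_orthogonal_decomposition[OF indep] .
    have "(\<Sum>j\<in>K. (cmod (hs_inner (W j) R))\<^sup>2) = 0"
      using quadratic[of R] RV1 RV2 hs_inner_commute[of R] by simp
    then have "hs_inner (W k) R = 0"
      using \<open>finite K\<close> \<open>k \<in> K\<close> by (simp add: sum_nonneg_eq_0_iff)
    moreover have "hs_inner V1 R = 0" "hs_inner V2 R = 0"
      using RV1 RV2 hs_inner_commute[of R] by simp_all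
    moreover have "R = W k - cscale_mat c V1 - cscale_mat d V2"
      using Wk by simp
    then have "hs_inner R X = hs_inner (W k) X - c * hs_inner V1 X - d * hs_inner V2 X" for X
      by (simp add: hs_inner_diff_left hs_inner_cscale_left)
    ultimately have "hs_inner R R = 0"
      by simp
    then show ?thesis
      using Wk by auto
  qed
  then obtain c d where span: "\<And>k. k \<in> K \<Longrightarrow> W k = cscale_mat (c k) V1 + cscale_mat (d k) V2"
    by metis
  obtain G where GV2: "hs_inner G V2 = 0" and V1G: "hs_inner V1 G \<noteq> 0"
    using lin_indep2_exists_orthogonal[OF indep] .
  have "hs_inner (W k) G = c k * hs_inner V1 G" if "k \<in> K" for k
    using span[OF that] GV2 hs_inner_commute[of G V2]
    by (simp add: hs_inner_add_left hs_inner_cscale_left)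
  then have "(\<Sum>k\<in>K. (cmod (c k))\<^sup>2) * (cmod (hs_inner V1 G))\<^sup>2 = \<alpha> * (cmod (hs_inner V1 G))\<^sup>2"
    using quadratic[of G] GV2 hs_inner_commute[of G V2]
    by (simp add: sum_distrib_right norm_mult power_mult_distrib)
  with V1G have "(\<Sum>k\<in>K. (cmod (c k))\<^sup>2) = \<alpha>"
    by simp
  with span that show thesis by blast
qed

subsection \<open>Block matrices and the partial trace\<close>

definition block ::
    "'a^('n::finite \<times> 'k::finite)^('m::finite \<times> 'l::finite) \<Rightarrow> 'l \<Rightarrow> 'k \<Rightarrow> 'a^'n^'m" where
  "block M a b = (\<chi> i p. M $ (i, a) $ (p, b))"

lemma block_nth [simp]: "block M a b $ i $ p = M $ (i, a) $ (p, b)"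
  by (simp add: block_def)

lemma matrix_eq_iff_blocks: "M = N \<longleftrightarrow> (\<forall>a b. block M a b = block N a b)"
  by (auto simp: vec_eq_iff)

lemma sum_UNIV_prod: "(\<Sum>x\<in>UNIV. f x) = (\<Sum>a\<in>UNIV. \<Sum>b\<in>UNIV. f (a, b))"
  unfolding UNIV_Times_UNIV[symmetric] sum.cartesian_product by (simp add: split_def)

lemma block_mult: "block (A ** B) a c = (\<Sum>b\<in>UNIV. block A a b ** block B b c)"
  by (auto simp: vec_eq_iff matrix_mult_nth sum_component sum_UNIV_prod intro: sum.swap)

lemma block_adjoint_mat: "block (adjoint_mat M) a b = adjoint_mat (block M b a)"
  by (simp add: vec_eq_iff)

lemma block_mat_one: "block (mat 1) a b = (if a = b then mat 1 else 0)"
  by (simp add: vec_eq_iff mat_def)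

lemma block_tensor_id: "block (tensor_id x) a b = (if a = b then x else 0)"
  by (simp add: vec_eq_iff tensor_id_def)

lemma partial_tr_eq_sum_blocks:
  "partial_tr (M :: complex^('n::finite \<times> 'k::finite)^('n \<times> 'k))
     = (1 / real CARD('k)) *\<^sub>R (\<Sum>a\<in>UNIV. block M a a)"
  by (simp add: vec_eq_iff partial_tr_def sum_component scaleR_conv_of_real[where 'a=complex])

lemma partial_tr_conj_tensor_id:
  fixes u :: "complex^('n::finite \<times> 'k::finite)^('n \<times> 'k)"
  shows "partial_tr (u ** tensor_id x ** adjoint_mat u)
     = (1 / real CARD('k)) *\<^sub>R (\<Sum>a\<in>UNIV. \<Sum>b\<in>UNIV. block u a b ** x ** adjoint_mat (block u a b))"
proof -
  have "block (u ** tensor_id x ** adjoint_mat u) a a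
      = (\<Sum>b\<in>UNIV. block u a b ** x ** adjoint_mat (block u a b))" for a
    by (simp add: block_mult block_tensor_id block_adjoint_mat if_distrib if_distribR
        cong: if_cong)
  then show ?thesis
    by (simp add: partial_tr_eq_sum_blocks)
qed

definition block_diag ::
    "('k::finite \<Rightarrow> 'a::zero^'n::finite^'m::finite) \<Rightarrow> 'a^('n \<times> 'k)^('m \<times> 'k)" where
  "block_diag B = (\<chi> r s. if snd r = snd s then B (snd r) $ fst r $ fst s else 0)"

lemma block_block_diag: "block (block_diag B) a b = (if a = b then B a else 0)"
  by (simp add: vec_eq_iff block_diag_def)

lemma unitary_mat_block_diag:
  assumes "\<And>a. unitary_mat (B a)"
  shows "unitary_mat (block_diag B)"
proof -
  have "(if a = b then B a else 0) ** adjoint_mat (if c = b then B c else 0)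
      = (if a = c then if b = a then B a ** adjoint_mat (B a) else 0 else 0)"
    "adjoint_mat (if b = a then B b else 0) ** (if b = c then B b else 0)
      = (if a = c then if b = a then adjoint_mat (B a) ** B a else 0 else 0)" for a b c
    by auto
  then show ?thesis
    using assms
    by (simp add: unitary_mat_def matrix_eq_iff_blocks block_mult block_adjoint_mat
        block_block_diag block_mat_one)
qed

lemma partial_tr_conj_block_diag:
  fixes B :: "'k::finite \<Rightarrow> complex^'n::finite^'n"
  shows "partial_tr (block_diag B ** tensor_id x ** adjoint_mat (block_diag B))
     = (1 / real CARD('k)) *\<^sub>R (\<Sum>a\<in>UNIV. B a ** x ** adjoint_mat (B a))"
proof -
  have "(if a = b then B a else 0) ** x ** adjoint_mat (if a = b then B a else 0)
      = (if a = b then B a ** x ** adjoint_mat (B a) else 0)" for a b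
    by simp
  then show ?thesis
    by (simp add: partial_tr_conj_tensor_id block_block_diag)
qed

subsection \<open>Orthogonal projections have natural trace\<close>

lemma trace_adjoint_mult_self: "trace (adjoint_mat A ** A) = hs_inner A A"
  unfolding trace_def hs_inner_def matrix_mult_nth adjoint_mat_nth
  by (subst sum.swap) (simp add: mult.commute)

lemma adjoint_mult_self_idempotent:
  fixes C D :: "complex^'k::finite^'k"
  assumes sum_one: "adjoint_mat C ** C + adjoint_mat D ** D = mat 1"
    and orth: "adjoint_mat C ** D = 0"
  shows "(adjoint_mat C ** C) ** (adjoint_mat C ** C) = adjoint_mat C ** C"
proof -
  define M where "M = C + D"
  define P where "P = adjoint_mat C ** C"
  have "adjoint_mat D ** C = 0"
    using arg_cong[OF orth, of adjoint_mat] by (simp add: adjoint_mat_mult)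
  then have MM: "adjoint_mat M ** M = mat 1" and MC: "adjoint_mat M ** C = P"
    using sum_one orth
    by (simp_all add: M_def P_def matrix_add_ldistrib matrix_add_rdistrib add_ac)
  have "M ** adjoint_mat M = mat 1"
    using MM matrix_left_right_inverse by blast
  then have "C = M ** P"
    by (metis MC matrix_mul_assoc matrix_mul_lid)
  then have "P = adjoint_mat P ** (adjoint_mat M ** M) ** P"
    by (metis P_def adjoint_mat_mult matrix_mul_assoc)
  also have "adjoint_mat P = P"
    by (simp add: P_def adjoint_mat_mult)
  finally show ?thesis
    by (simp add: MM P_def)
qed

lemma trace_projection:
  assumes "adjoint_mat P = P" and "P ** P = P"
  shows "trace P = hs_inner P P"
  using trace_adjoint_mult_self[of P] assms by simp

lemma trace_projection_minus_one:
  fixes P :: "complex^'k::finite^'k"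
  assumes herm: "adjoint_mat P = P" and idem: "P ** P = P" and "P \<noteq> 0"
  obtains Q :: "complex^'k^'k"
  where "adjoint_mat Q = Q" and "Q ** Q = Q" and "trace Q = trace P - 1"
proof -
  have herm_nth: "cnj (P $ y $ x) = P $ x $ y" for x y
    using arg_cong[OF herm, of "\<lambda>A. A $ x $ y"] by simp
  have idem_nth: "(\<Sum>y\<in>UNIV. P $ x $ y * P $ y $ z) = P $ x $ z" for x z
    using arg_cong[OF idem, of "\<lambda>A. A $ x $ z"] by (simp add: matrix_mult_nth)
  have "trace P \<noteq> 0"
    using \<open>P \<noteq> 0\<close> trace_projection[OF herm idem] by simp
  then obtain a where s_nz: "P $ a $ a \<noteq> 0"
    unfolding trace_def by (meson sum.neutral)
  define s where "s = P $ a $ a"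
  have s_real: "cnj s = s"
    using herm_nth[of a a] by (simp add: s_def)
  text \<open>Q removes from P the rank-one projection onto its a-th column, whose squared norm is s.\<close>
  define Q :: "complex^'k^'k" where "Q = (\<chi> x y. P $ x $ y - P $ x $ a * P $ a $ y / s)"
  have Q_nth: "Q $ x $ y = P $ x $ y - P $ x $ a * P $ a $ y / s" for x y
    by (simp add: Q_def)
  have "adjoint_mat Q = Q"
    by (simp add: vec_eq_iff Q_nth herm_nth s_real mult.commute)
  moreover have "(Q ** Q) $ x $ z = Q $ x $ z" for x z
  proof -
    have "(Q ** Q) $ x $ z = (\<Sum>y\<in>UNIV. P $ x $ y * P $ y $ z)
        - P $ a $ z / s * (\<Sum>y\<in>UNIV. P $ x $ y * P $ y $ a)
        - P $ x $ a / s * (\<Sum>y\<in>UNIV. P $ a $ y * P $ y $ z)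
        + P $ x $ a * P $ a $ z / s\<^sup>2 * (\<Sum>y\<in>UNIV. P $ a $ y * P $ y $ a)"
      by (simp add: matrix_mult_nth Q_nth sum_subtractf sum.distrib sum_distrib_left
          sum_divide_distrib power2_eq_square algebra_simps)
    also have "\<dots> = Q $ x $ z"
      unfolding idem_nth using s_nz by (simp add: Q_nth s_def power2_eq_square field_simps)
    finally show ?thesis .
  qed
  then have "Q ** Q = Q"
    by (simp add: vec_eq_iff)
  moreover have "trace Q = trace P - (\<Sum>x\<in>UNIV. P $ a $ x * P $ x $ a) / s"
    by (simp add: trace_def Q_nth sum_subtractf sum_divide_distrib mult.commute)
  then have "trace Q = trace P - 1"
    using s_nz by (simp add: idem_nth s_def)
  ultimately show thesis
    by (rule that)
qed

lemma trace_projection_nat: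
  fixes P :: "complex^'k::finite^'k"
  assumes "adjoint_mat P = P" and "P ** P = P"
  obtains m :: nat where "trace P = of_nat m"
proof -
  have main: "\<exists>m::nat. trace P = of_nat m"
    if "adjoint_mat P = P" "P ** P = P" "Re (trace P) < real n" for n and P :: "complex^'k^'k"
    using that
  proof (induction n arbitrary: P)
    case 0
    then have "Re (hs_inner P P) < 0"
      by (simp add: trace_projection)
    moreover have "0 \<le> Re (hs_inner P P)"
      unfolding hs_inner_self Re_complex_of_real by (intro sum_nonneg) auto
    ultimately show ?case
      by simp
  next
    case (Suc n)
    show ?case
    proof (cases "P = 0")
      case True
      then show ?thesis
        by (metis of_nat_0 trace_0 mat_0)
    next
      case False
      then obtain Q :: "complex^'k^'k"
        where Q: "adjoint_mat Q = Q" "Q ** Q = Q" "trace Q = trace P - 1"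
        using trace_projection_minus_one[OF Suc.prems(1,2)] by blast
      have "Re (trace Q) < real n"
        using Suc.prems(3) Q(3) by simp
      then obtain m :: nat where "trace Q = of_nat m"
        using Suc.IH[OF Q(1,2)] by blast
      with \<open>trace Q = trace P - 1\<close> have "trace P = of_nat (Suc m)"
        by (simp add: algebra_simps)
      then show ?thesis ..
    qed
  qed
  obtain n :: nat where "Re (trace P) < real n"
    using reals_Archimedean2 by blast
  then show thesis
    using main[OF assms] that by blast
qed

subsection \<open>Unitary dilations of a mixture of two unitaries\<close>

definition lin_indep3 :: "complex^'m^'n \<Rightarrow> complex^'m^'n \<Rightarrow> complex^'m^'n \<Rightarrow> bool" where
  "lin_indep3 A B C \<longleftrightarrow>
     (\<forall>a b c. cscale_mat a A + cscale_mat b B + cscale_mat c C = 0 \<longrightarrow> a = 0 \<and> b = 0 \<and> c = 0)"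

lemma lin_indep3_imp_lin_indep2:
  assumes "unitary_mat u1" and "lin_indep3 (mat 1) (adjoint_mat u1 ** u2) (adjoint_mat u2 ** u1)"
  shows "lin_indep2 u1 u2"
  unfolding lin_indep2_def
proof (intro allI impI)
  fix x y
  assume "cscale_mat x u1 + cscale_mat y u2 = 0"
  then have "adjoint_mat u1 ** (cscale_mat x u1 + cscale_mat y u2) = 0"
    by simp
  then have "cscale_mat x (mat 1) + cscale_mat y (adjoint_mat u1 ** u2)
      + cscale_mat 0 (adjoint_mat u2 ** u1) = 0"
    using assms(1) by (simp add: matrix_add_ldistrib unitary_mat_def)
  then show "x = 0 \<and> y = 0"
    using assms(2) unfolding lin_indep3_def by blast
qed

definition unitary_mixture ::
    "real \<Rightarrow> complex^'n^'n \<Rightarrow> complex^'n^'n \<Rightarrow> complex^'n^'n \<Rightarrow> complex^'n^'n" where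
  "unitary_mixture t u1 u2 x
     = t *\<^sub>R (u1 ** x ** adjoint_mat u1) + (1 - t) *\<^sub>R (u2 ** x ** adjoint_mat u2)"

lemma unitary_span_blocks_coeffs:
  fixes u :: "complex^('n::finite \<times> 'k::finite)^('n \<times> 'k)" and C D :: "complex^'k^'k"
  assumes "unitary_mat u" and "unitary_mat u1" and "unitary_mat u2"
    and indep: "lin_indep3 (mat 1) (adjoint_mat u1 ** u2) (adjoint_mat u2 ** u1)"
    and blocks: "\<And>a b. block u a b = cscale_mat (C $ a $ b) u1 + cscale_mat (D $ a $ b) u2"
  shows "adjoint_mat C ** C + adjoint_mat D ** D = mat 1" and "adjoint_mat C ** D = 0"
proof -
  have "(adjoint_mat C ** C + adjoint_mat D ** D) $ b $ b' = mat 1 $ b $ b'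
      \<and> (adjoint_mat C ** D) $ b $ b' = 0" for b b'
  proof -
    have "cscale_mat (mat 1 $ b $ b') (mat 1) = block (adjoint_mat u ** u) b b'"
      using assms(1) unfolding unitary_mat_def by (simp add: block_mat_one) (simp add: mat_def)
    also have "\<dots> = cscale_mat ((adjoint_mat C ** C + adjoint_mat D ** D) $ b $ b') (mat 1)
        + cscale_mat ((adjoint_mat C ** D) $ b $ b') (adjoint_mat u1 ** u2)
        + cscale_mat ((adjoint_mat D ** C) $ b $ b') (adjoint_mat u2 ** u1)"
      using assms(2,3)
      by (simp add: unitary_mat_def block_mult block_adjoint_mat blocks adjoint_mat_mult
          matrix_add_ldistrib matrix_add_rdistrib sum.distrib cscale_mat_sum_left matrix_mult_nth
          cscale_mat_add_left cscale_mat_add_right algebra_simps)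
    finally have
      "cscale_mat ((adjoint_mat C ** C + adjoint_mat D ** D) $ b $ b' - mat 1 $ b $ b') (mat 1)
        + cscale_mat ((adjoint_mat C ** D) $ b $ b') (adjoint_mat u1 ** u2)
        + cscale_mat ((adjoint_mat D ** C) $ b $ b') (adjoint_mat u2 ** u1) = 0"
      by (simp add: vec_eq_iff algebra_simps)
    then have "(adjoint_mat C ** C + adjoint_mat D ** D) $ b $ b' - mat 1 $ b $ b' = 0
        \<and> (adjoint_mat C ** D) $ b $ b' = 0"
      using indep unfolding lin_indep3_def by blast
    then show ?thesis
      by simp
  qed
  then show "adjoint_mat C ** C + adjoint_mat D ** D = mat 1" and "adjoint_mat C ** D = 0"
    by (simp_all add: vec_eq_iff)
qed

lemma k_noisy_unitary_mixture_weight: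
  fixes u1 u2 :: "complex^'n::finite^'n"
  assumes "unitary_mat u1" and "unitary_mat u2"
    and indep: "lin_indep3 (mat 1) (adjoint_mat u1 ** u2) (adjoint_mat u2 ** u1)"
    and "k_noisy TYPE('k::finite) (unitary_mixture t u1 u2)"
  obtains m :: nat where "t = m / CARD('k)"
proof -
  obtain u :: "complex^('n \<times> 'k)^('n \<times> 'k)" where "unitary_mat u"
    and dilation: "\<And>x. unitary_mixture t u1 u2 x = partial_tr (u ** tensor_id x ** adjoint_mat u)"
    using assms(4) unfolding k_noisy_def by blast
  define W where "W ab = block u (fst ab) (snd ab)" for ab
  have "(\<Sum>ab\<in>UNIV. W ab ** x ** adjoint_mat (W ab))
      = (CARD('k) * t) *\<^sub>R (u1 ** x ** adjoint_mat u1)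
        + (CARD('k) * (1 - t)) *\<^sub>R (u2 ** x ** adjoint_mat u2)" for x
  proof -
    have "(\<Sum>ab\<in>UNIV. W ab ** x ** adjoint_mat (W ab)) = real CARD('k) *\<^sub>R unitary_mixture t u1 u2 x"
      by (simp add: dilation W_def sum_UNIV_prod partial_tr_conj_tensor_id)
    then show ?thesis
      by (simp add: unitary_mixture_def scaleR_add_right)
  qed
  then obtain c d where span: "\<And>ab. ab \<in> UNIV \<Longrightarrow> W ab = cscale_mat (c ab) u1 + cscale_mat (d ab) u2"
    and weight: "(\<Sum>ab\<in>UNIV. (cmod (c ab))\<^sup>2) = CARD('k) * t"
    by (rule kraus_operators_in_span[OF finite_class.finite_UNIV
          lin_indep3_imp_lin_indep2[OF assms(1) indep]]) blast
  define C :: "complex^'k^'k" where "C = (\<chi> a b. c (a, b))"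
  define D :: "complex^'k^'k" where "D = (\<chi> a b. d (a, b))"
  have "block u a b = cscale_mat (C $ a $ b) u1 + cscale_mat (D $ a $ b) u2" for a b
    using span[OF UNIV_I, of "(a, b)"] by (simp add: W_def C_def D_def)
  from unitary_span_blocks_coeffs[OF \<open>unitary_mat u\<close> assms(1,2) indep this]
  have "(adjoint_mat C ** C) ** (adjoint_mat C ** C) = adjoint_mat C ** C"
    by (rule adjoint_mult_self_idempotent)
  moreover have "adjoint_mat (adjoint_mat C ** C) = adjoint_mat C ** C"
    by (simp add: adjoint_mat_mult)
  ultimately obtain m :: nat where "trace (adjoint_mat C ** C) = of_nat m"
    using trace_projection_nat by blast
  moreover have "trace (adjoint_mat C ** C) = of_real (CARD('k) * t)"
    unfolding trace_adjoint_mult_self hs_inner_self weight[symmetric]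
      sum_UNIV_prod[of "\<lambda>ab. (cmod (c ab))\<^sup>2"]
    by (simp add: C_def)
  ultimately have "CARD('k) * t = m"
    by (metis of_real_eq_iff of_real_of_nat_eq)
  then show thesis
    using that by (simp add: field_simps)
qed

lemma unitary_mixture_k_noisy:
  fixes u1 u2 :: "complex^'n::finite^'n"
  assumes "unitary_mat u1" and "unitary_mat u2"
    and "m \<le> CARD('k::finite)" and "t = m / CARD('k)"
  shows "k_noisy TYPE('k) (unitary_mixture t u1 u2)"
proof -
  obtain S :: "'k set" where "card S = m"
    using obtain_subset_with_card_n[OF assms(3)[folded card_UNIV]] by blast
  define B where "B a = (if a \<in> S then u1 else u2)" for a
  have "unitary_mat (block_diag B)"
    using assms(1,2) by (intro unitary_mat_block_diag) (simp add: B_def)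
  moreover have
    "unitary_mixture t u1 u2 x = partial_tr (block_diag B ** tensor_id x ** adjoint_mat (block_diag B))"
    for x
  proof -
    have "(\<Sum>a\<in>UNIV. B a ** x ** adjoint_mat (B a))
        = real m *\<^sub>R (u1 ** x ** adjoint_mat u1)
          + real (CARD('k) - m) *\<^sub>R (u2 ** x ** adjoint_mat u2)"
      by (simp add: B_def if_distrib if_distribR sum.If_cases Int_absorb1 Diff_eq[symmetric]
          card_Diff_subset sum_constant_scaleR \<open>card S = m\<close> del: sum_constant cong: if_cong)
    moreover have "real m / CARD('k) = t" and "real (CARD('k) - m) / CARD('k) = 1 - t"
      using assms(3,4) by (simp_all add: of_nat_diff diff_divide_distrib)
    ultimately show ?thesis
      by (simp add: partial_tr_conj_block_diag unitary_mixture_def scaleR_add_right)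
  qed
  ultimately show ?thesis
    unfolding k_noisy_def by blast
qed

theorem mainTheorem3:
  fixes u1 u2 :: "complex^'n::finite^'n" and t :: real
  assumes "CARD('n) \<ge> 3"
    and "unitary_mat u1" and "unitary_mat u2"
    and "\<forall>a b c :: complex. (cscale_mat a (mat 1 :: complex^'n^'n) + cscale_mat b (adjoint_mat u1 ** u2)
             + cscale_mat c (adjoint_mat u2 ** u1) = 0) \<longrightarrow> a = 0 \<and> b = 0 \<and> c = 0"
    and "0 < t" and "t < 1"
    and "CARD('k::finite) \<ge> 2"
  defines "\<Phi> \<equiv> (\<lambda>x. t *\<^sub>R (u1 ** x ** adjoint_mat u1) + (1 - t) *\<^sub>R (u2 ** x ** adjoint_mat u2))"
  shows "(k_noisy TYPE('k) \<Phi> \<longleftrightarrow> (\<exists>m::int. t = of_int m / of_nat CARD('k)))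
         \<and> (t \<notin> \<rat> \<longrightarrow> \<not> k_noisy TYPE('k) \<Phi>)"
proof -
  have \<Phi>: "\<Phi> = unitary_mixture t u1 u2"
    by (simp add: \<Phi>_def unitary_mixture_def fun_eq_iff)
  have indep: "lin_indep3 (mat 1) (adjoint_mat u1 ** u2) (adjoint_mat u2 ** u1)"
    using assms(4) unfolding lin_indep3_def .
  have noisy_imp_weight: "\<exists>m::nat. t = m / CARD('k)" if "k_noisy TYPE('k) \<Phi>"
    using k_noisy_unitary_mixture_weight[OF assms(2,3) indep that[unfolded \<Phi>]] by metis
  have "k_noisy TYPE('k) \<Phi>" if "t = of_int m / of_nat CARD('k)" for m :: int
  proof -
    have "0 < m" and "m < CARD('k)"
      using assms(5,6) that by (simp_all add: field_simps)
    then have "nat m \<le> CARD('k)" and "t = nat m / CARD('k)"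
      using that by simp_all
    then show ?thesis
      unfolding \<Phi> by (rule unitary_mixture_k_noisy[OF assms(2,3)])
  qed
  moreover have "t \<in> \<rat>" if "k_noisy TYPE('k) \<Phi>"
    using noisy_imp_weight[OF that] by auto
  ultimately show ?thesis
    using noisy_imp_weight by (metis of_int_of_nat_eq)
qed

end
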